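(* Consider an instance of the Profile Matching Problem (as defined in the context), with metric $d$ equal to either the Hamming distance $d_h$ or the Weighted Hamming distance $d_w$. Let $\mu_1$ and $\mu_2$ be two stable matchings for this instance. Then $d\bigl(x,\mu_1(x)\bigr)=d\bigl(x,\mu_2(x)\bigr)$ for every participant $x\in\mathcal{M}\cup\mathcal{W}$.
   Context: Profile Matching Problem: there is a set $\mathcal{M}$ of $n$ men and a set $\mathcal{W}$ of $n$ women, and an integer $k\ge 1$. Each participant $x\in\mathcal{M}\cup\mathcal{W}$ has a profile $\mathbf{a}(x)=(a_1(x),\dots,a_k(x))\in Q_k=\{0,1\}^k$. Two metrics on $Q_k$ are considered: the Hamming distance $d_h(\mathbf{a},\mathbf{a}')=\sum_{i=1}^k\mathbf{1}(a_i\neq a_i')$ and the Weighted Hamming distance $d_w(\mathbf{a},\mathbf{a}')=\sum_{i=1}^k 2^{-i}\mathbf{1}(a_i\neq a_i')$. For participants $x,y$ write $d(x,y)=d(\mathbf{a}(x),\mathbf{a}(y))$. Each participant $x$ has a tie-breaking list $T_x$, a strict total order on the members of the opposite sex. The strict preference list $P_x$ of $x$ ranks the members of the opposite sex in increasing order of $d(x,\cdot)$, and members at equal distance from $x$ are ordered according to $T_x$; write $y\succ_x y'$ if $x$ ranks $y$ above $y'$ in $P_x$. A matching is a map $\mu$ from $\mathcal{M}\cup\mathcal{W}$ to itself with $\mu(m)\in\mathcal{W}\cup\{m\}$ for men, $\mu(w)\in\mathcal{M}\cup\{w\}$ for women, and $\mu(m)=w\iff\mu(w)=m$. A pair $(m,w)$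 is blocking for $\mu$ if $w\succ_m\mu(m)$ and $m\succ_w\mu(w)$; $\mu$ is stable if it has no blocking pair. *)

theory Defs
  imports Complex_Main
begin

text \<open>Profiles in Q_k are modelled as functions nat => bool; only coordinates 1..k matter.\<close>

definition hamming_dist :: "nat \<Rightarrow> (nat \<Rightarrow> bool) \<Rightarrow> (nat \<Rightarrow> bool) \<Rightarrow> real" where
  "hamming_dist k a b = (\<Sum>i=1..k. if a i \<noteq> b i then 1 else 0)"

definition weighted_hamming_dist :: "nat \<Rightarrow> (nat \<Rightarrow> bool) \<Rightarrow> (nat \<Rightarrow> bool) \<Rightarrow> real" where
  "weighted_hamming_dist k a b = (\<Sum>i=1..k. if a i \<noteq> b i then (1/2) ^ i else 0)"

definition opposite :: "'p set \<Rightarrow> 'p set \<Rightarrow> 'p \<Rightarrow> 'p set" where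
  "opposite M W x = (if x \<in> M then W else M)"

definition ranks_above ::
  "('q \<Rightarrow> 'q \<Rightarrow> real) \<Rightarrow> ('p \<Rightarrow> 'q) \<Rightarrow> ('p \<Rightarrow> 'p rel) \<Rightarrow> 'p \<Rightarrow> 'p \<Rightarrow> 'p \<Rightarrow> bool" where
  "ranks_above d a T x y y' \<longleftrightarrow>
     d (a x) (a y) < d (a x) (a y') \<or> (d (a x) (a y) = d (a x) (a y') \<and> (y, y') \<in> T x)"

text \<open>x prefers y (of the opposite sex) to its current status z = mu x; being unmatched
  (z = x) is worse than being matched to any member of the opposite sex.\<close>
definition prefers ::
  "'p set \<Rightarrow> 'p set \<Rightarrow> ('q \<Rightarrow> 'q \<Rightarrow> real) \<Rightarrow> ('p \<Rightarrow> 'q) \<Rightarrow> ('p \<Rightarrow> 'p rel) \<Rightarrow> 'p \<Rightarrow> 'p \<Rightarrow> 'p \<Rightarrow> bool" where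
  "prefers M W d a T x y z \<longleftrightarrow>
     y \<in> opposite M W x \<and> (z = x \<or> (z \<in> opposite M W x \<and> ranks_above d a T x y z))"

definition is_matching :: "'p set \<Rightarrow> 'p set \<Rightarrow> ('p \<Rightarrow> 'p) \<Rightarrow> bool" where
  "is_matching M W mu \<longleftrightarrow>
     (\<forall>m\<in>M. mu m \<in> W \<union> {m}) \<and> (\<forall>w\<in>W. mu w \<in> M \<union> {w}) \<and>
     (\<forall>m\<in>M. \<forall>w\<in>W. mu m = w \<longleftrightarrow> mu w = m)"

definition blocking_pair ::
  "'p set \<Rightarrow> 'p set \<Rightarrow> ('q \<Rightarrow> 'q \<Rightarrow> real) \<Rightarrow> ('p \<Rightarrow> 'q) \<Rightarrow> ('p \<Rightarrow> 'p rel) \<Rightarrow> ('p \<Rightarrow> 'p) \<Rightarrow> 'p \<Rightarrow> 'p \<Rightarrow> bool" where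
  "blocking_pair M W d a T mu m w \<longleftrightarrow>
     m \<in> M \<and> w \<in> W \<and> prefers M W d a T m w (mu m) \<and> prefers M W d a T w m (mu w)"

definition stable_matching ::
  "'p set \<Rightarrow> 'p set \<Rightarrow> ('q \<Rightarrow> 'q \<Rightarrow> real) \<Rightarrow> ('p \<Rightarrow> 'q) \<Rightarrow> ('p \<Rightarrow> 'p rel) \<Rightarrow> ('p \<Rightarrow> 'p) \<Rightarrow> bool" where
  "stable_matching M W d a T mu \<longleftrightarrow>
     is_matching M W mu \<and> (\<nexists>m w. blocking_pair M W d a T mu m w)"

end

theory Submission
  imports Defs
begin

text \<open>Since the metric is symmetric, distances can be compared from either side of a pair.
  Let S be the set of men who strictly prefer their mu1-partner to their mu2-partner. For
  m \<in> S with w = mu1 m, stability of mu2 forces w to prefer m' = mu2 w to m, and then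
  stability of mu1 forces m' to prefer mu1 m' to w, so m' \<in> S. Hence m \<mapsto> mu2 (mu1 m) is an
  injective self-map of the finite set S, along which the mu2-distance
  d(m, mu2 m) \<ge> d(m, mu1 m) = d(w, m) \<ge> d(w, m') = d(m', mu2 m') never increases; it is
  therefore constant, and all these inequalities are equalities. The same argument with
  mu1 and mu2 exchanged, or with the sexes exchanged, covers everybody else.\<close>

lemma nonincreasing_along_inj_self_map_eq:
  fixes g :: "'a \<Rightarrow> 'b::ordered_cancel_comm_monoid_add"
  assumes "finite S" and "inj_on f S" and "f ` S \<subseteq> S"
    and nonincr: "\<And>x. x \<in> S \<Longrightarrow> g (f x) \<le> g x" and "x \<in> S"
  shows "g (f x) = g x"
proof (rule ccontr)
  assume "g (f x) \<noteq> g x"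
  with nonincr \<open>x \<in> S\<close> have "sum (g \<circ> f) S < sum g S"
    by (intro sum_strict_mono_ex1 \<open>finite S\<close>) (auto simp: order.strict_iff_order)
  moreover have "sum (g \<circ> f) S = sum g S"
    using sum.reindex[OF \<open>inj_on f S\<close>, of g] endo_inj_surj[OF assms(1,3,2)] by simp
  ultimately show False by simp
qed

lemma hamming_dist_commute: "hamming_dist k p q = hamming_dist k q p"
  unfolding hamming_dist_def by (rule sum.cong) auto

lemma weighted_hamming_dist_commute: "weighted_hamming_dist k p q = weighted_hamming_dist k q p"
  unfolding weighted_hamming_dist_def by (rule sum.cong) auto

lemma ranks_above_imp_dist_le: "ranks_above d a T x y z \<Longrightarrow> d (a x) (a y) \<le> d (a x) (a z)"
  unfolding ranks_above_def by auto

lemma not_ranks_above_imp_ranks_above: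
  assumes "total_on A (T x)" and "y \<in> A" and "z \<in> A" and "y \<noteq> z"
    and "\<not> ranks_above d a T x y z"
  shows "ranks_above d a T x z y"
  using assms unfolding ranks_above_def total_on_def by auto

lemma prefers_iff_ranks_above_man:
  assumes "M \<inter> W = {}" and "m \<in> M" and "y \<in> W" and "z \<in> W"
  shows "prefers M W d a T m y z \<longleftrightarrow> ranks_above d a T m y z"
  using assms unfolding prefers_def opposite_def by auto

lemma prefers_iff_ranks_above_woman:
  assumes "M \<inter> W = {}" and "w \<in> W" and "y \<in> M" and "z \<in> M"
  shows "prefers M W d a T w y z \<longleftrightarrow> ranks_above d a T w y z"
  using assms unfolding prefers_def opposite_def by auto

lemma blocking_pair_swap:
  assumes "M \<inter> W = {}"
  shows "blocking_pair W M d a T mu w m \<longleftrightarrow> blocking_pair M W d a T mu m w"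
  using assms unfolding blocking_pair_def prefers_def opposite_def by auto

lemma stable_matching_swap:
  assumes "M \<inter> W = {}" and "stable_matching M W d a T mu"
  shows "stable_matching W M d a T mu"
  using assms blocking_pair_swap[OF assms(1)]
  unfolding stable_matching_def is_matching_def by blast

lemma stable_matching_no_blocking:
  assumes "stable_matching M W d a T mu" and "m \<in> M" and "w \<in> W"
    and "prefers M W d a T m w (mu m)"
  shows "\<not> prefers M W d a T w m (mu w)"
  using assms unfolding stable_matching_def blocking_pair_def by blast

lemma matching_partner_partner:
  assumes "is_matching M W mu"
  shows "m \<in> M \<Longrightarrow> mu m \<in> W \<Longrightarrow> mu (mu m) = m"
    and "w \<in> W \<Longrightarrow> mu w \<in> M \<Longrightarrow> mu (mu w) = w"
  using assms unfolding is_matching_def by auto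

lemma matching_card_matched:
  assumes "is_matching M W mu"
  shows "card {m \<in> M. mu m \<in> W} = card {w \<in> W. mu w \<in> M}"
proof (rule bij_betw_same_card, rule bij_betw_byWitness[where f' = mu])
  show "mu ` {m \<in> M. mu m \<in> W} \<subseteq> {w \<in> W. mu w \<in> M}"
    and "mu ` {w \<in> W. mu w \<in> M} \<subseteq> {m \<in> M. mu m \<in> W}"
    using matching_partner_partner[OF assms] by auto
qed (use matching_partner_partner[OF assms] in auto)

text \<open>An unmatched man and an unmatched woman would block; counting matched men and women
  shows that if one sex has an unmatched member, so does the other.\<close>

lemma stable_matching_matches_men:
  assumes "finite M" and "finite W" and "M \<inter> W = {}" and "card M = card W"
    and stable: "stable_matching M W d a T mu" and "m \<in> M"
  shows "mu m \<in> W"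
proof (rule ccontr)
  assume "mu m \<notin> W"
  have matching: "is_matching M W mu" using stable unfolding stable_matching_def by simp
  then have m_single: "mu m = m" using \<open>m \<in> M\<close> \<open>mu m \<notin> W\<close> unfolding is_matching_def by auto
  have "card {w \<in> W. mu w \<in> M} = card {m \<in> M. mu m \<in> W}"
    using matching_card_matched[OF matching] by simp
  also have "\<dots> < card M"
    using \<open>m \<in> M\<close> \<open>mu m \<notin> W\<close> \<open>finite M\<close> by (intro psubset_card_mono) auto
  finally have "{w \<in> W. mu w \<in> M} \<noteq> W" using \<open>card M = card W\<close> by auto
  then obtain w where "w \<in> W" and "mu w \<notin> M" by auto
  then have "mu w = w" using matching unfolding is_matching_def by auto
  have "blocking_pair M W d a T mu m w"
    using \<open>m \<in> M\<close> \<open>w \<in> W\<close> m_single \<open>mu w = w\<close> \<open>M \<inter> W = {}\<close>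
    unfolding blocking_pair_def prefers_def opposite_def by auto
  with stable show False unfolding stable_matching_def by blast
qed

locale two_stable_matchings =
  fixes M W :: "'p set" and d :: "'q \<Rightarrow> 'q \<Rightarrow> real" and a :: "'p \<Rightarrow> 'q"
    and T :: "'p \<Rightarrow> 'p rel" and mu1 mu2 :: "'p \<Rightarrow> 'p"
  assumes finite_men: "finite M" and disjoint: "M \<inter> W = {}"
    and total_men: "\<And>m. m \<in> M \<Longrightarrow> total_on W (T m)"
    and total_women: "\<And>w. w \<in> W \<Longrightarrow> total_on M (T w)"
    and dist_commute: "\<And>p q. d p q = d q p"
    and stable1: "stable_matching M W d a T mu1"
    and stable2: "stable_matching M W d a T mu2"
    and men_matched1: "\<And>m. m \<in> M \<Longrightarrow> mu1 m \<in> W"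
    and women_matched1: "\<And>w. w \<in> W \<Longrightarrow> mu1 w \<in> M"
    and men_matched2: "\<And>m. m \<in> M \<Longrightarrow> mu2 m \<in> W"
    and women_matched2: "\<And>w. w \<in> W \<Longrightarrow> mu2 w \<in> M"
begin

lemma mu1_mu1: "x \<in> M \<union> W \<Longrightarrow> mu1 (mu1 x) = x"
  using stable1 matching_partner_partner[of M W mu1] men_matched1 women_matched1
  unfolding stable_matching_def by auto

lemma mu2_mu2: "x \<in> M \<union> W \<Longrightarrow> mu2 (mu2 x) = x"
  using stable2 matching_partner_partner[of M W mu2] men_matched2 women_matched2
  unfolding stable_matching_def by auto

definition men_preferring_mu1 :: "'p set" where
  "men_preferring_mu1 = {m \<in> M. mu1 m \<noteq> mu2 m \<and> ranks_above d a T m (mu1 m) (mu2 m)}"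

definition next_man :: "'p \<Rightarrow> 'p" where
  "next_man m = mu2 (mu1 m)"

lemma woman_prefers_next_man:
  assumes "m \<in> men_preferring_mu1"
  shows "ranks_above d a T (mu1 m) (next_man m) m"
proof -
  define w where "w = mu1 m"
  have "m \<in> M" and "w \<noteq> mu2 m" and m_prefers: "ranks_above d a T m w (mu2 m)"
    using assms unfolding men_preferring_mu1_def w_def by auto
  have "w \<in> W" and "mu2 w \<in> M" and "mu2 m \<in> W"
    using \<open>m \<in> M\<close> men_matched1 women_matched2 men_matched2 unfolding w_def by auto
  have "prefers M W d a T m w (mu2 m)"
    using m_prefers
    by (simp add: prefers_iff_ranks_above_man[OF disjoint \<open>m \<in> M\<close> \<open>w \<in> W\<close> \<open>mu2 m \<in> W\<close>])
  then have "\<not> prefers M W d a T w m (mu2 w)"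
    using stable_matching_no_blocking[OF stable2] \<open>m \<in> M\<close> \<open>w \<in> W\<close> by blast
  then have "\<not> ranks_above d a T w m (mu2 w)"
    by (simp add: prefers_iff_ranks_above_woman[OF disjoint \<open>w \<in> W\<close> \<open>m \<in> M\<close> \<open>mu2 w \<in> M\<close>])
  moreover have "mu2 w \<noteq> m" using \<open>w \<noteq> mu2 m\<close> mu2_mu2 \<open>w \<in> W\<close> by force
  ultimately have "ranks_above d a T w (mu2 w) m"
    using not_ranks_above_imp_ranks_above[of M T w m "mu2 w" d a]
      total_women \<open>w \<in> W\<close> \<open>m \<in> M\<close> \<open>mu2 w \<in> M\<close>
    by blast
  then show ?thesis unfolding w_def next_man_def .
qed

lemma next_man_preferring_mu1:
  assumes "m \<in> men_preferring_mu1"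
  shows "next_man m \<in> men_preferring_mu1"
proof -
  define w m' where "w = mu1 m" and "m' = mu2 w"
  have "m \<in> M" using assms unfolding men_preferring_mu1_def by simp
  then have "w \<in> W" and "m' \<in> M" and "mu1 m' \<in> W" and "mu1 w = m" and "mu2 m' = w"
    using men_matched1 women_matched2 mu1_mu1 mu2_mu2 unfolding w_def m'_def by auto
  have "ranks_above d a T w m' m"
    using woman_prefers_next_man[OF assms] unfolding w_def m'_def next_man_def .
  then have "prefers M W d a T w m' (mu1 w)"
    using \<open>mu1 w = m\<close>
    by (simp add: prefers_iff_ranks_above_woman[OF disjoint \<open>w \<in> W\<close> \<open>m' \<in> M\<close> \<open>m \<in> M\<close>])
  then have "\<not> prefers M W d a T m' w (mu1 m')"
    using stable_matching_no_blocking[OF stable1] \<open>m' \<in> M\<close> \<open>w \<in> W\<close> by blast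
  then have "\<not> ranks_above d a T m' w (mu1 m')"
    by (simp add: prefers_iff_ranks_above_man[OF disjoint \<open>m' \<in> M\<close> \<open>w \<in> W\<close> \<open>mu1 m' \<in> W\<close>])
  moreover have "mu1 m' \<noteq> w"
  proof
    assume "mu1 m' = w"
    then have "m' = m" using mu1_mu1 \<open>m' \<in> M\<close> \<open>mu1 w = m\<close> by force
    with \<open>mu2 m' = w\<close> assms show False unfolding men_preferring_mu1_def w_def by simp
  qed
  ultimately have "ranks_above d a T m' (mu1 m') (mu2 m')"
    using not_ranks_above_imp_ranks_above[of W T m' w "mu1 m'" d a]
      total_men \<open>m' \<in> M\<close> \<open>w \<in> W\<close> \<open>mu1 m' \<in> W\<close>
      \<open>mu2 m' = w\<close> by auto
  with \<open>m' \<in> M\<close> \<open>mu1 m' \<noteq> w\<close> \<open>mu2 m' = w\<close> show ?thesis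
    unfolding men_preferring_mu1_def next_man_def w_def m'_def by simp
qed

lemma inj_on_next_man: "inj_on next_man men_preferring_mu1"
proof (rule inj_onI)
  fix x y assume "x \<in> men_preferring_mu1" "y \<in> men_preferring_mu1" "next_man x = next_man y"
  then have "x \<in> M" "y \<in> M" "mu2 (mu2 (mu1 x)) = mu2 (mu2 (mu1 y))"
    unfolding men_preferring_mu1_def next_man_def by auto
  then have "mu1 x = mu1 y" using men_matched1 mu2_mu2 by simp
  then show "x = y" using \<open>x \<in> M\<close> \<open>y \<in> M\<close> mu1_mu1 by (metis UnI1)
qed

lemma dist_mu1_le_mu2:
  assumes "m \<in> men_preferring_mu1"
  shows "d (a m) (a (mu1 m)) \<le> d (a m) (a (mu2 m))"
  using assms ranks_above_imp_dist_le[of d a T m "mu1 m" "mu2 m"]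
  unfolding men_preferring_mu1_def by simp

lemma dist_next_man_le:
  assumes "m \<in> men_preferring_mu1"
  shows "d (a (next_man m)) (a (mu2 (next_man m))) \<le> d (a m) (a (mu1 m))"
proof -
  have "m \<in> M" using assms unfolding men_preferring_mu1_def by simp
  then have "mu2 (next_man m) = mu1 m"
    using men_matched1 mu2_mu2 unfolding next_man_def by blast
  then show ?thesis
    using ranks_above_imp_dist_le[OF woman_prefers_next_man[OF assms]] dist_commute by metis
qed

lemma dist_eq_if_preferring_mu1:
  assumes "m \<in> men_preferring_mu1"
  shows "d (a m) (a (mu1 m)) = d (a m) (a (mu2 m))"
proof -
  have "finite men_preferring_mu1"
    using finite_men unfolding men_preferring_mu1_def by simp
  moreover have "next_man ` men_preferring_mu1 \<subseteq> men_preferring_mu1"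
    using next_man_preferring_mu1 by blast
  moreover have "d (a (next_man x)) (a (mu2 (next_man x))) \<le> d (a x) (a (mu2 x))"
    if "x \<in> men_preferring_mu1" for x
    using dist_mu1_le_mu2[OF that] dist_next_man_le[OF that] by linarith
  ultimately have "d (a (next_man m)) (a (mu2 (next_man m))) = d (a m) (a (mu2 m))"
    using nonincreasing_along_inj_self_map_eq[OF _ inj_on_next_man,
        of "\<lambda>x. d (a x) (a (mu2 x))"] assms by blast
  then show ?thesis
    using dist_mu1_le_mu2[OF assms] dist_next_man_le[OF assms] by linarith
qed

end

lemma two_stable_matchings_swap:
  "two_stable_matchings M W d a T mu1 mu2 \<Longrightarrow> two_stable_matchings M W d a T mu2 mu1"
  unfolding two_stable_matchings_def by (simp add: conj_ac)

lemma two_stable_matchings_dist_eq_men: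
  assumes "two_stable_matchings M W d a T mu1 mu2" and "m \<in> M"
  shows "d (a m) (a (mu1 m)) = d (a m) (a (mu2 m))"
proof -
  interpret first: two_stable_matchings M W d a T mu1 mu2 by (rule assms(1))
  interpret second: two_stable_matchings M W d a T mu2 mu1
    by (rule two_stable_matchings_swap[OF assms(1)])
  show ?thesis
  proof (cases "mu1 m = mu2 m")
    case False
    have "total_on W (T m)" "mu1 m \<in> W" "mu2 m \<in> W"
      using first.total_men first.men_matched1 first.men_matched2 \<open>m \<in> M\<close> by auto
    with False have "ranks_above d a T m (mu1 m) (mu2 m) \<or> ranks_above d a T m (mu2 m) (mu1 m)"
      using not_ranks_above_imp_ranks_above[of W T m "mu1 m" "mu2 m" d a] by blast
    then show ?thesis
    proof
      assume "ranks_above d a T m (mu1 m) (mu2 m)"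
      with False \<open>m \<in> M\<close> have "m \<in> first.men_preferring_mu1"
        unfolding first.men_preferring_mu1_def by simp
      then show ?thesis by (rule first.dist_eq_if_preferring_mu1)
    next
      assume "ranks_above d a T m (mu2 m) (mu1 m)"
      with False \<open>m \<in> M\<close> have "m \<in> second.men_preferring_mu1"
        unfolding second.men_preferring_mu1_def by simp
      then show ?thesis using second.dist_eq_if_preferring_mu1 by simp
    qed
  qed simp
qed

lemma two_stable_matchingsI:
  assumes "finite M" and "finite W" and "M \<inter> W = {}" and "card M = card W"
    and "\<forall>m\<in>M. strict_linear_order_on W (T m)"
    and "\<forall>w\<in>W. strict_linear_order_on M (T w)"
    and "\<And>p q. d p q = d q p"
    and "stable_matching M W d a T mu1" and "stable_matching M W d a T mu2"
  shows "two_stable_matchings M W d a T mu1 mu2"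
proof -
  have "stable_matching W M d a T mu1" "stable_matching W M d a T mu2"
    using assms(3,8,9) stable_matching_swap by blast+
  then show ?thesis
    using assms stable_matching_matches_men[of M W d a T] stable_matching_matches_men[of W M d a T]
    unfolding two_stable_matchings_def strict_linear_order_on_def by (simp add: Int_commute)
qed

theorem lemma3p1:
  fixes M W :: "'p set" and n k :: nat
    and a :: "'p \<Rightarrow> (nat \<Rightarrow> bool)"
    and T :: "'p \<Rightarrow> 'p rel"
    and d :: "(nat \<Rightarrow> bool) \<Rightarrow> (nat \<Rightarrow> bool) \<Rightarrow> real"
    and mu1 mu2 :: "'p \<Rightarrow> 'p"
  assumes "finite M" and "finite W" and "M \<inter> W = {}"
    and "card M = n" and "card W = n"
    and "k \<ge> 1"
    and "\<forall>m\<in>M. strict_linear_order_on W (T m)"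
    and "\<forall>w\<in>W. strict_linear_order_on M (T w)"
    and "d = hamming_dist k \<or> d = weighted_hamming_dist k"
    and "stable_matching M W d a T mu1"
    and "stable_matching M W d a T mu2"
  shows "\<forall>x\<in>M \<union> W. d (a x) (a (mu1 x)) = d (a x) (a (mu2 x))"
proof -
  have d_commute: "\<And>p q. d p q = d q p"
    using assms(9) by (auto simp: hamming_dist_commute weighted_hamming_dist_commute)
  have cards: "card M = card W" "card W = card M"
    using assms(4,5) by simp_all
  have "two_stable_matchings M W d a T mu1 mu2"
    by (rule two_stable_matchingsI[OF assms(1-3) cards(1) assms(7,8) d_commute assms(10,11)])
  moreover have "two_stable_matchings W M d a T mu1 mu2"
    by (rule two_stable_matchingsI[OF assms(2,1) _ cards(2) assms(8,7) d_commute
          stable_matching_swap[OF assms(3,10)] stable_matching_swap[OF assms(3,11)]])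
      (use assms(3) in blast)
  ultimately show ?thesis
    using two_stable_matchings_dist_eq_men[of M W d a T mu1 mu2]
      two_stable_matchings_dist_eq_men[of W M d a T mu1 mu2] by blast
qed

end
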